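(* For every assessment $\mathcal{A}\subseteq\mathscr{Q}$, $\mathrm{Ex}(\mathcal{A})=\mathrm{Rs}(\mathrm{Posi}(\mathscr{V}^s_{>0}\cup\mathcal{A}))$.
   Context: Let $\mathcal{X}$ be a nonempty set and let $\mathscr{V}$ be the real vector space of all functions $u:\mathcal{X}\to\mathbb{R}$ (options), with pointwise operations. For $u,v\in\mathscr{V}$, $u\le v$ iff $u(x)\le v(x)$ for all $x\in\mathcal{X}$, and $u<v$ iff $u\le v$ and $u\neq v$. Let $\mathscr{V}_{>0}=\{u\in\mathscr{V}:0<u\}$, $\mathscr{V}_{\le0}=\{u\in\mathscr{V}:u\le0\}$ and $\mathscr{V}^s_{>0}=\{\{u\}:u\in\mathscr{V}_{>0}\}$. Let $\mathscr{Q}$ be the set of all finite subsets of $\mathscr{V}$ (including $\emptyset$). For a positive integer $n$, $\mathbb{R}^{n,+}=\{\boldsymbol\lambda\in\mathbb{R}^n:\lambda_j\ge0\ \forall j,\ \sum_j\lambda_j>0\}$, and for $\boldsymbol\lambda\in\mathbb{R}^n$, $\mathbf u=(u_1,\dots,u_n)\in\mathscr{V}^n$, $\boldsymbol\lambda\mathbf u=\sum_{j=1}^n\lambda_ju_j$. A set of desirable option sets is any $K\subseteq\mathscr{Q}$. It is coherent if for all $A,B\in K$: (K0) $A\setminus\{0\}\in K$; (K1) $\{0\}\notin K$; (K2) $\mathscr{V}^s_{>0}\subseteq K$; (K3) $\{\boldsymbol\lambda(\mathbf u)\mathbf u:\mathbf u\in A\times B\}\in K$ for every map $\boldsymbol\lambda:A\times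 B\to\mathbb{R}^{2,+}$; (K4) $A\cup Q\in K$ for all $Q\in\mathscr{Q}$. $\bar{\mathbf K}$ denotes the set of coherent sets of desirable option sets. An assessment is any subset $\mathcal{A}\subseteq\mathscr{Q}$. Let $\bar{\mathbf K}(\mathcal A)=\{K\in\bar{\mathbf K}:\mathcal A\subseteq K\}$ and $\mathrm{Ex}(\mathcal A)=\bigcap\bar{\mathbf K}(\mathcal A)$, with the convention $\bigcap\emptyset=\mathscr{Q}$. For $\mathcal{A}\subseteq\mathscr{Q}$: $\mathrm{Posi}(\mathcal{A})=\{\{\boldsymbol\lambda(\mathbf u)\mathbf u:\mathbf u\in\times_{k=1}^nA_k\}: n\in\mathbb{N},\ A_1,\dots,A_n\in\mathcal A,\ \boldsymbol\lambda:\times_{k=1}^nA_k\to\mathbb{R}^{n,+}\}$ (where $\mathbb{N}$ denotes the positive integers), and $\mathrm{Rs}(\mathcal{A})=\{A\in\mathscr{Q}:\exists B\in\mathcal{A},\ B\setminus\mathscr{V}_{\le0}\subseteq A\}$. *)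

theory Defs
  imports Complex_Main "HOL-Library.Function_Algebras" "HOL-Library.FuncSet"
begin

type_synonym 'x opt = "'x \<Rightarrow> real"

definition Qs :: "'x opt set set" where
  "Qs = {A. finite A}"

definition Vpos :: "'x opt set" where
  "Vpos = {u. 0 < u}"

definition Vnonpos :: "'x opt set" where
  "Vnonpos = {u. u \<le> 0}"

definition Vspos :: "'x opt set set" where
  "Vspos = {{u} | u. u \<in> Vpos}"

text \<open>lambda in R^{n,+}, coordinates indexed by 0..n-1\<close>
definition Rnplus :: "nat \<Rightarrow> (nat \<Rightarrow> real) set" where
  "Rnplus n = {l. (\<forall>j<n. 0 \<le> l j) \<and> (\<Sum>j<n. l j) > 0}"

definition coherent :: "'x opt set set \<Rightarrow> bool" where
  "coherent K \<longleftrightarrow> K \<subseteq> Qs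
     \<and> (\<forall>A\<in>K. A - {0} \<in> K)
     \<and> {0} \<notin> K
     \<and> Vspos \<subseteq> K
     \<and> (\<forall>A\<in>K. \<forall>B\<in>K. \<forall>lam :: 'x opt \<times> 'x opt \<Rightarrow> (nat \<Rightarrow> real).
           (\<forall>p\<in>A \<times> B. lam p \<in> Rnplus 2) \<longrightarrow>
           {(\<lambda>x. lam (u, v) 0 * u x + lam (u, v) 1 * v x) | u v. u \<in> A \<and> v \<in> B} \<in> K)
     \<and> (\<forall>A\<in>K. \<forall>Q\<in>Qs. A \<union> Q \<in> K)"

definition Ex :: "'x opt set set \<Rightarrow> 'x opt set set" where
  "Ex \<A> = (if {K. coherent K \<and> \<A> \<subseteq> K} = {} then Qs
           else \<Inter> {K. coherent K \<and> \<A> \<subseteq> K})"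

text \<open>Tuples u in the product of A_0..A_{n-1} are functions nat => opt in PiE {..<n} A.\<close>
definition Posi :: "'x opt set set \<Rightarrow> 'x opt set set" where
  "Posi \<A> = {{(\<lambda>x. \<Sum>k<n. lam u k * u k x) | u. u \<in> PiE {..<n} As} | n As lam.
       0 < n \<and> (\<forall>k<n. As k \<in> \<A>) \<and> (\<forall>u\<in>PiE {..<n} As. lam u \<in> Rnplus n)}"

definition Rs :: "'x opt set set \<Rightarrow> 'x opt set set" where
  "Rs \<A> = {A \<in> Qs. \<exists>B\<in>\<A>. B - Vnonpos \<subseteq> A}"

end

theory Submission
  imports Defs
begin

text \<open>Every coherent \<open>K\<close> containing \<open>\<A>\<close> contains \<open>Rs (Posi (Vspos \<union> \<A>))\<close>: an element of
  \<open>Posi\<close> with \<open>n + 1\<close> factors arises from one with \<open>n\<close> factors by one more application of (K3),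
  pairing the last factor with the combinations of the first \<open>n\<close>; and removing a nonpositive
  option \<open>u \<noteq> 0\<close> is (K3) against \<open>{-u}\<close>, which produces \<open>0\<close>, followed by (K0).
  Conversely \<open>Posi\<close> is closed under (K3) by concatenating the factor lists, \<open>Rs\<close> preserves this
  because nonpositive options can be passed through the combination unchanged, and the other
  axioms hold for \<open>Rs (Posi (Vspos \<union> \<A>))\<close> unless it contains \<open>{}\<close>; in that case it is all of
  \<open>Qs\<close>, and no coherent set contains \<open>\<A>\<close>.\<close>

definition pairwise_comb ::
    "'x opt set \<Rightarrow> 'x opt set \<Rightarrow> ('x opt \<times> 'x opt \<Rightarrow> nat \<Rightarrow> real) \<Rightarrow> 'x opt set" where
  "pairwise_comb A B lam = {(\<lambda>x. lam (u, v) 0 * u x + lam (u, v) 1 * v x) | u v. u \<in> A \<and> v \<in> B}"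

definition comb_closed :: "'x opt set set \<Rightarrow> bool" where
  "comb_closed X \<longleftrightarrow> (\<forall>A\<in>X. \<forall>B\<in>X. \<forall>lam. (\<forall>p\<in>A \<times> B. lam p \<in> Rnplus 2) \<longrightarrow> pairwise_comb A B lam \<in> X)"

lemma pairwise_comb_subsetI:
  assumes "\<And>u v. u \<in> A \<Longrightarrow> v \<in> B \<Longrightarrow> (\<lambda>x. lam (u, v) 0 * u x + lam (u, v) 1 * v x) \<in> S"
  shows "pairwise_comb A B lam \<subseteq> S"
  using assms unfolding pairwise_comb_def by auto

lemma Rnplus_2_iff: "l \<in> Rnplus 2 \<longleftrightarrow> 0 \<le> l 0 \<and> 0 \<le> l 1 \<and> 0 < l 0 + l 1"
  unfolding Rnplus_def by (auto simp: numeral_2_eq_2 less_Suc_eq)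

lemma Rnplus_2_combI:
  "0 \<le> s \<Longrightarrow> 0 \<le> t \<Longrightarrow> 0 < s + t \<Longrightarrow> (\<lambda>x. s * a x + t * b x) \<in> S \<Longrightarrow>
    \<exists>\<mu>\<in>Rnplus 2. (\<lambda>x. \<mu> 0 * a x + \<mu> 1 * b x) \<in> S"
  by (rule bexI[of _ "\<lambda>j. if j = 0 then s else t"]) (auto simp: Rnplus_2_iff)

lemma finite_pairwise_comb: "finite A \<Longrightarrow> finite B \<Longrightarrow> finite (pairwise_comb A B lam)"
  unfolding pairwise_comb_def by (simp add: finite_image_set2)

lemma coherent_iff_closure_conditions:
  "coherent K \<longleftrightarrow> K \<subseteq> Qs \<and> (\<forall>A\<in>K. A - {0} \<in> K) \<and> {0} \<notin> K \<and> Vspos \<subseteq> K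
     \<and> comb_closed K \<and> (\<forall>A\<in>K. \<forall>Q\<in>Qs. A \<union> Q \<in> K)"
  unfolding coherent_def comb_closed_def pairwise_comb_def by blast

lemma coherent_finite: "coherent K \<Longrightarrow> A \<in> K \<Longrightarrow> finite A"
  unfolding coherent_def Qs_def by blast

lemma coherent_Diff_zero: "coherent K \<Longrightarrow> A \<in> K \<Longrightarrow> A - {0} \<in> K"
  unfolding coherent_def by blast

lemma coherent_pos_singleton: "coherent K \<Longrightarrow> 0 < u \<Longrightarrow> {u} \<in> K"
  unfolding coherent_def Vspos_def Vpos_def by blast

lemma coherent_superset: "coherent K \<Longrightarrow> A \<in> K \<Longrightarrow> A \<subseteq> B \<Longrightarrow> finite B \<Longrightarrow> B \<in> K"
  unfolding coherent_def Qs_def by (metis Un_absorb1 mem_Collect_eq)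

lemma coherent_Vspos_subset: "coherent K \<Longrightarrow> Vspos \<subseteq> K"
  unfolding coherent_def by blast

lemma coherent_empty_notin: "coherent K \<Longrightarrow> {} \<notin> K"
  using coherent_superset[of K "{}" "{0}"] unfolding coherent_def by auto

lemma coherent_pairwise_comb:
  "coherent K \<Longrightarrow> A \<in> K \<Longrightarrow> B \<in> K \<Longrightarrow> \<forall>p\<in>A \<times> B. lam p \<in> Rnplus 2 \<Longrightarrow> pairwise_comb A B lam \<in> K"
  unfolding coherent_iff_closure_conditions comb_closed_def by blast

lemma coherent_pairwise_combination:
  assumes K: "coherent K" and A: "A \<in> K" and B: "B \<in> K" and S: "finite S"
    and comb: "\<And>a b. a \<in> A \<Longrightarrow> b \<in> B \<Longrightarrow> \<exists>\<mu>\<in>Rnplus 2. (\<lambda>x. \<mu> 0 * a x + \<mu> 1 * b x) \<in> S"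
  shows "S \<in> K"
proof -
  have "\<forall>p\<in>A \<times> B. \<exists>\<mu>. \<mu> \<in> Rnplus 2 \<and> (\<lambda>x. \<mu> 0 * fst p x + \<mu> 1 * snd p x) \<in> S"
    using comb by fastforce
  from bchoice[OF this] obtain lam where
    lam: "\<forall>p\<in>A \<times> B. lam p \<in> Rnplus 2 \<and> (\<lambda>x. lam p 0 * fst p x + lam p 1 * snd p x) \<in> S" ..
  have "pairwise_comb A B lam \<subseteq> S"
  proof (rule pairwise_comb_subsetI)
    fix u v assume "u \<in> A" "v \<in> B"
    then show "(\<lambda>x. lam (u, v) 0 * u x + lam (u, v) 1 * v x) \<in> S"
      using bspec[OF lam, of "(u, v)"] by simp
  qed
  moreover have "pairwise_comb A B lam \<in> K"
    using coherent_pairwise_comb[OF K A B] lam by simp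
  ultimately show ?thesis
    using coherent_superset[OF K _ _ S] by blast
qed

lemma coherent_family_combination:
  assumes K: "coherent K" and C: "C \<in> K" and E: "\<And>c. c \<in> C \<Longrightarrow> E c \<in> K" and S: "finite S"
    and comb: "\<And>c e. c \<in> C \<Longrightarrow> e \<in> E c \<Longrightarrow> \<exists>\<mu>\<in>Rnplus 2. (\<lambda>x. \<mu> 0 * c x + \<mu> 1 * e x) \<in> S"
  shows "S \<in> K"
proof -
  have fin: "finite C"
    using coherent_finite[OF K C] .
  have "(C - P) \<union> S \<in> K" if "finite P" "P \<subseteq> C" for P
    using that
  proof (induction P rule: finite_induct)
    case empty
    show ?case
      using coherent_superset[OF K C] fin S by simp
  next
    case (insert c P)
    show ?case
    proof (rule coherent_pairwise_combination[OF K _ E])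
      show "(C - P) \<union> S \<in> K" "c \<in> C"
        using insert by simp_all
      show "finite ((C - insert c P) \<union> S)"
        using fin S by simp
      fix a e assume a: "a \<in> (C - P) \<union> S" and e: "e \<in> E c"
      show "\<exists>\<mu>\<in>Rnplus 2. (\<lambda>x. \<mu> 0 * a x + \<mu> 1 * e x) \<in> (C - insert c P) \<union> S"
      proof (cases "a = c")
        case True
        then show ?thesis
          using comb[OF _ e] insert.prems by auto
      next
        case False
        then show ?thesis
          using a by (intro Rnplus_2_combI[of 1 0]) auto
      qed
    qed
  qed
  from this[OF fin order_refl] show ?thesis
    by simp
qed

lemma Rs_subset_coherent:
  assumes K: "coherent K"
  shows "Rs K \<subseteq> K"
proof
  fix A assume "A \<in> Rs K"
  then obtain B where A: "finite A" and B: "B \<in> K" "B - Vnonpos \<subseteq> A"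
    unfolding Rs_def Qs_def by blast
  text \<open>A nonzero nonpositive \<open>c\<close> combines with \<open>- c\<close> to \<open>0\<close>, which (K0) then removes.\<close>
  define E where "E c = (if c \<in> Vnonpos - {0} then {- c} else B)" for c
  have "(B - Vnonpos) \<union> {0} \<in> K"
  proof (rule coherent_family_combination[OF K B(1)])
    show "E c \<in> K" for c
      using B(1) coherent_pos_singleton[OF K, of "- c"]
      by (auto simp: E_def Vnonpos_def less_le)
    show "finite ((B - Vnonpos) \<union> {0})"
      using coherent_finite[OF K B(1)] by simp
    fix c e assume c: "c \<in> B" and e: "e \<in> E c"
    show "\<exists>\<mu>\<in>Rnplus 2. (\<lambda>x. \<mu> 0 * c x + \<mu> 1 * e x) \<in> (B - Vnonpos) \<union> {0}"
    proof (cases "c \<in> Vnonpos - {0}")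
      case True
      then have "e = - c"
        using e by (simp add: E_def)
      then show ?thesis
        by (intro Rnplus_2_combI[of 1 1]) auto
    next
      case False
      then show ?thesis
        using c by (intro Rnplus_2_combI[of 1 0]) auto
    qed
  qed
  then have "(B - Vnonpos) \<union> {0} - {0} \<in> K"
    by (rule coherent_Diff_zero[OF K])
  moreover have "(B - Vnonpos) \<union> {0} - {0} \<subseteq> A"
    using B(2) by blast
  ultimately show "A \<in> K"
    using coherent_superset[OF K _ _ A] by blast
qed

definition lincomb :: "nat \<Rightarrow> (nat \<Rightarrow> real) \<Rightarrow> (nat \<Rightarrow> 'x opt) \<Rightarrow> 'x opt" where
  "lincomb n l u = (\<lambda>x. \<Sum>k<n. l k * u k x)"

lemma Posi_iff:
  "P \<in> Posi X \<longleftrightarrow> (\<exists>n As lam. 0 < n \<and> (\<forall>k<n. As k \<in> X) \<and> (\<forall>u\<in>PiE {..<n} As. lam u \<in> Rnplus n)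
     \<and> P = {lincomb n (lam u) u | u. u \<in> PiE {..<n} As})"
  unfolding Posi_def lincomb_def by blast

lemma lincomb_scale: "lincomb n (\<lambda>k. c * l k) u = (\<lambda>x. c * lincomb n l u x)"
  unfolding lincomb_def by (simp add: sum_distrib_left mult.assoc)

lemma lincomb_fun_upd_beyond: "n \<le> k \<Longrightarrow> lincomb n l (u(k := c)) = lincomb n l u"
  unfolding lincomb_def by (auto intro!: sum.cong)

text \<open>If the first \<open>n\<close> weights all vanish, they weigh the zero option, so any weight vector
  may replace them.\<close>
definition head_weights :: "nat \<Rightarrow> (nat \<Rightarrow> real) \<Rightarrow> nat \<Rightarrow> real" where
  "head_weights n l = (if 0 < (\<Sum>k<n. l k) then l else (\<lambda>k. if k = 0 then 1 else 0))"

lemma head_weights_Rnplus: "l \<in> Rnplus (Suc n) \<Longrightarrow> 0 < n \<Longrightarrow> head_weights n l \<in> Rnplus n"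
  unfolding head_weights_def Rnplus_def by auto

lemma lincomb_Suc_head_weights:
  assumes "l \<in> Rnplus (Suc n)" and "lincomb (Suc n) l u \<in> S"
  shows "\<exists>\<mu>\<in>Rnplus 2. (\<lambda>x. \<mu> 0 * u n x + \<mu> 1 * lincomb n (head_weights n l) u x) \<in> S"
proof -
  have l: "\<forall>k\<le>n. 0 \<le> l k" "0 < (\<Sum>k<n. l k) + l n"
    using assms(1) unfolding Rnplus_def by auto
  have split: "lincomb (Suc n) l u = (\<lambda>x. l n * u n x + lincomb n l u x)"
    unfolding lincomb_def by (simp add: add.commute)
  show ?thesis
  proof (cases "0 < (\<Sum>k<n. l k)")
    case True
    then show ?thesis
      using l(1)[rule_format, of n] split assms(2)
      by (intro Rnplus_2_combI[of "l n" 1]) (simp_all add: head_weights_def)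
  next
    case False
    have nonneg: "\<forall>k\<in>{..<n}. 0 \<le> l k"
      using l(1) by simp
    then have "(\<Sum>k<n. l k) = 0"
      using False sum_nonneg[of "{..<n}" l] by fastforce
    then have "\<forall>k<n. l k = 0"
      using nonneg sum_nonneg_eq_0_iff[of "{..<n}" l] by simp
    then have "lincomb n l u = 0"
      unfolding lincomb_def by (simp add: fun_eq_iff)
    then show ?thesis
      using l \<open>(\<Sum>k<n. l k) = 0\<close> split assms(2) by (intro Rnplus_2_combI[of "l n" 0]) simp_all
  qed
qed

lemma coherent_lincomb_closed:
  assumes K: "coherent K" and n: "0 < n" and As: "\<And>k. k < n \<Longrightarrow> As k \<in> K" and S: "finite S"
    and lam: "\<And>u. u \<in> PiE {..<n} As \<Longrightarrow> lam u \<in> Rnplus n \<and> lincomb n (lam u) u \<in> S"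
  shows "S \<in> K"
  using n As S lam
proof (induction n arbitrary: As S lam rule: nat_induct_non_zero)
  case 1
  show ?case
  proof (rule coherent_family_combination[OF K, of "As 0" "\<lambda>_. As 0"])
    fix c e assume c: "c \<in> As 0"
    define u where "u = (\<lambda>_::nat. undefined)(0 := c)"
    have "u \<in> PiE {..<1} As"
      using PiE_fun_upd[where T = As and x = 0 and S = "{}" and f = "\<lambda>_. undefined", OF c]
      by (simp add: u_def lessThan_Suc)
    then have "lam u \<in> Rnplus 1" "lincomb 1 (lam u) u \<in> S"
      using "1.prems" by auto
    then show "\<exists>\<mu>\<in>Rnplus 2. (\<lambda>x. \<mu> 0 * c x + \<mu> 1 * e x) \<in> S"
      by (intro Rnplus_2_combI[of "lam u 0" 0]) (auto simp: Rnplus_def lincomb_def u_def)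
  qed (use "1.prems" in auto)
next
  case (Suc n)
  have fin: "finite (PiE {..<n} As)"
    using Suc.prems(1) coherent_finite[OF K] by (intro finite_PiE) auto
  have upd: "u(n := c) \<in> PiE {..<Suc n} As" if "u \<in> PiE {..<n} As" "c \<in> As n" for u c
    using PiE_fun_upd[OF that(2,1)] by (simp add: lessThan_Suc)
  define E where
    "E c = {lincomb n (head_weights n (lam (u(n := c)))) u | u. u \<in> PiE {..<n} As}" for c
  show ?case
  proof (rule coherent_family_combination[OF K _ _ Suc.prems(2)])
    show "As n \<in> K"
      using Suc.prems(1) by simp
    fix c assume c: "c \<in> As n"
    show "E c \<in> K"
    proof (rule Suc.IH)
      show "As k \<in> K" if "k < n" for k
        using Suc.prems(1) that by simp
      show "finite (E c)"
        using fin unfolding E_def by simp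
      fix u assume u: "u \<in> PiE {..<n} As"
      show "head_weights n (lam (u(n := c))) \<in> Rnplus n \<and>
          lincomb n (head_weights n (lam (u(n := c)))) u \<in> E c"
        using head_weights_Rnplus Suc.prems(3)[OF upd[OF u c]] Suc.hyps u unfolding E_def by blast
    qed
    fix e assume "e \<in> E c"
    then obtain u where u: "u \<in> PiE {..<n} As"
      and e: "e = lincomb n (head_weights n (lam (u(n := c)))) u"
      unfolding E_def by blast
    have "lam (u(n := c)) \<in> Rnplus (Suc n)" "lincomb (Suc n) (lam (u(n := c))) (u(n := c)) \<in> S"
      using Suc.prems(3)[OF upd[OF u c]] by blast+
    from lincomb_Suc_head_weights[OF this]
    show "\<exists>\<mu>\<in>Rnplus 2. (\<lambda>x. \<mu> 0 * c x + \<mu> 1 * e x) \<in> S"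
      by (simp add: e lincomb_fun_upd_beyond)
  qed
qed

lemma Posi_subset_coherent:
  assumes K: "coherent K" and X: "X \<subseteq> K"
  shows "Posi X \<subseteq> K"
proof
  fix P assume "P \<in> Posi X"
  then obtain n As lam where n: "0 < n" and As: "\<forall>k<n. As k \<in> X"
    and lam: "\<forall>u\<in>PiE {..<n} As. lam u \<in> Rnplus n"
    and P: "P = {lincomb n (lam u) u | u. u \<in> PiE {..<n} As}"
    unfolding Posi_iff by blast
  have "finite (PiE {..<n} As)"
    using As X coherent_finite[OF K] by (intro finite_PiE) auto
  then have "finite P"
    unfolding P by simp
  then show "P \<in> K"
    using coherent_lincomb_closed[OF K n _ _ ] As X lam unfolding P by blast
qed

lemma sum_lessThan_add: "(\<Sum>k<n + (m::nat). f k) = (\<Sum>k<n. f k) + (\<Sum>k<m. f (k + n))"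
  by (induction m) (auto simp: add.commute add.left_commute)

definition seq_append :: "nat \<Rightarrow> (nat \<Rightarrow> 'a) \<Rightarrow> (nat \<Rightarrow> 'a) \<Rightarrow> nat \<Rightarrow> 'a" where
  "seq_append n f g = (\<lambda>k. if k < n then f k else g (k - n))"

lemma lincomb_seq_append:
  "lincomb (n + m) (seq_append n l l') (seq_append n u u') =
    (\<lambda>x. lincomb n l u x + lincomb m l' u' x)"
  unfolding lincomb_def seq_append_def by (simp add: sum_lessThan_add)

lemma Rnplus_seq_append:
  assumes "l \<in> Rnplus n" "l' \<in> Rnplus m" "0 \<le> s" "0 \<le> t" "0 < s + t"
  shows "seq_append n (\<lambda>k. s * l k) (\<lambda>k. t * l' k) \<in> Rnplus (n + m)"
proof -
  have l: "\<forall>k<n. 0 \<le> l k" "0 < (\<Sum>k<n. l k)" "\<forall>k<m. 0 \<le> l' k" "0 < (\<Sum>k<m. l' k)"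
    using assms(1,2) unfolding Rnplus_def by auto
  have "0 < s * (\<Sum>k<n. l k) + t * (\<Sum>k<m. l' k)"
    using l(2,4) assms(3-5) by (smt (verit) mult_nonneg_nonneg mult_pos_pos)
  then show ?thesis
    using l(1,3) assms(3,4) unfolding Rnplus_def seq_append_def
    by (auto simp: sum_lessThan_add sum_distrib_left)
qed

lemma PiE_seq_append:
  "PiE {..<n + m} (seq_append n As Bs) =
     {seq_append n u v | u v. u \<in> PiE {..<n} As \<and> v \<in> PiE {..<m} Bs}"
proof (intro equalityI subsetI)
  fix w assume w: "w \<in> PiE {..<n + m} (seq_append n As Bs)"
  have "w k \<in> As k" if "k < n" for k
    using PiE_mem[OF w, of k] that by (simp add: seq_append_def)
  moreover have "w (k + n) \<in> Bs k" if "k < m" for k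
    using PiE_mem[OF w, of "k + n"] that by (simp add: seq_append_def)
  ultimately have "restrict w {..<n} \<in> PiE {..<n} As"
    and "restrict (\<lambda>k. w (k + n)) {..<m} \<in> PiE {..<m} Bs"
    by (simp_all add: restrict_PiE_iff)
  moreover have "w = seq_append n (restrict w {..<n}) (restrict (\<lambda>k. w (k + n)) {..<m})"
    using w by (auto simp: seq_append_def PiE_iff extensional_def fun_eq_iff)
  ultimately show "w \<in> {seq_append n u v | u v. u \<in> PiE {..<n} As \<and> v \<in> PiE {..<m} Bs}"
    by blast
next
  fix w assume "w \<in> {seq_append n u v | u v. u \<in> PiE {..<n} As \<and> v \<in> PiE {..<m} Bs}"
  then show "w \<in> PiE {..<n + m} (seq_append n As Bs)"
    by (auto simp: seq_append_def PiE_iff extensional_def)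
qed

lemma restrict_seq_append:
  assumes "u \<in> PiE {..<n} As" "v \<in> PiE {..<m} Bs"
  shows "restrict (seq_append n u v) {..<n} = u"
    and "restrict (\<lambda>k. seq_append n u v (k + n)) {..<m} = v"
  using assms by (auto simp: seq_append_def PiE_iff extensional_def fun_eq_iff)

lemma setcompr_cong2:
  "(\<And>u v. P u v \<Longrightarrow> f u v = g u v) \<Longrightarrow> {f u v | u v. P u v} = {g u v | u v. P u v}"
  by (intro Collect_cong iffI; elim exE conjE) metis+

lemma Posi_seq_appendI:
  assumes n: "0 < n" and As: "\<forall>k<n. As k \<in> X" and Bs: "\<forall>k<m. Bs k \<in> X"
    and L: "\<And>u v. u \<in> PiE {..<n} As \<Longrightarrow> v \<in> PiE {..<m} Bs \<Longrightarrow> L (seq_append n u v) \<in> Rnplus (n + m)"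
  shows "{lincomb (n + m) (L (seq_append n u v)) (seq_append n u v) | u v.
      u \<in> PiE {..<n} As \<and> v \<in> PiE {..<m} Bs} \<in> Posi X"
proof -
  have "{lincomb (n + m) (L (seq_append n u v)) (seq_append n u v) | u v.
      u \<in> PiE {..<n} As \<and> v \<in> PiE {..<m} Bs} =
    {lincomb (n + m) (L w) w | w. w \<in> PiE {..<n + m} (seq_append n As Bs)}"
    unfolding PiE_seq_append by blast
  moreover have "\<forall>w\<in>PiE {..<n + m} (seq_append n As Bs). L w \<in> Rnplus (n + m)"
    unfolding PiE_seq_append using L by blast
  moreover have "\<forall>k<n + m. seq_append n As Bs k \<in> X"
    using As Bs by (simp add: seq_append_def)
  ultimately show ?thesis
    unfolding Posi_iff using n
    by (intro exI[of _ "n + m"] exI[of _ "seq_append n As Bs"] exI[of _ L]) simp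
qed

lemma Posi_comb_closed: "comb_closed (Posi X)"
  unfolding comb_closed_def
proof (intro ballI allI impI)
  fix PA PB lam
  assume PA: "PA \<in> Posi X" and PB: "PB \<in> Posi X" and lam: "\<forall>p\<in>PA \<times> PB. lam p \<in> Rnplus 2"
  obtain n As la where n: "0 < n" and As: "\<forall>k<n. As k \<in> X"
    and la: "\<forall>u\<in>PiE {..<n} As. la u \<in> Rnplus n"
    and PA_eq: "PA = {lincomb n (la u) u | u. u \<in> PiE {..<n} As}"
    using PA unfolding Posi_iff by blast
  obtain m Bs lb where Bs: "\<forall>k<m. Bs k \<in> X"
    and lb: "\<forall>v\<in>PiE {..<m} Bs. lb v \<in> Rnplus m"
    and PB_eq: "PB = {lincomb m (lb v) v | v. v \<in> PiE {..<m} Bs}"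
    using PB unfolding Posi_iff by blast
  define a where "a u = lincomb n (la u) u" for u
  define b where "b v = lincomb m (lb v) v" for v
  define L where "L w = (let u = restrict w {..<n}; v = restrict (\<lambda>k. w (k + n)) {..<m} in
      seq_append n (\<lambda>k. lam (a u, b v) 0 * la u k) (\<lambda>k. lam (a u, b v) 1 * lb v k))" for w
  have L_eq: "L (seq_append n u v) =
      seq_append n (\<lambda>k. lam (a u, b v) 0 * la u k) (\<lambda>k. lam (a u, b v) 1 * lb v k)"
    if "u \<in> PiE {..<n} As" "v \<in> PiE {..<m} Bs" for u v
    unfolding L_def Let_def restrict_seq_append[OF that] ..
  have lam_uv: "lam (a u, b v) \<in> Rnplus 2" if "u \<in> PiE {..<n} As" "v \<in> PiE {..<m} Bs" for u v
  proof -
    have "(a u, b v) \<in> PA \<times> PB"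
      using that unfolding PA_eq PB_eq a_def b_def by blast
    then show ?thesis
      using lam by blast
  qed
  have "{lincomb (n + m) (L (seq_append n u v)) (seq_append n u v) | u v.
      u \<in> PiE {..<n} As \<and> v \<in> PiE {..<m} Bs} \<in> Posi X"
  proof (rule Posi_seq_appendI[OF n As Bs])
    fix u v assume u: "u \<in> PiE {..<n} As" and v: "v \<in> PiE {..<m} Bs"
    show "L (seq_append n u v) \<in> Rnplus (n + m)"
      using Rnplus_seq_append[OF bspec[OF la u] bspec[OF lb v]] lam_uv[OF u v]
      by (simp add: L_eq[OF u v] Rnplus_2_iff)
  qed
  also have "{lincomb (n + m) (L (seq_append n u v)) (seq_append n u v) | u v.
      u \<in> PiE {..<n} As \<and> v \<in> PiE {..<m} Bs} =
    {(\<lambda>x. lam (a u, b v) 0 * a u x + lam (a u, b v) 1 * b v x) | u v.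
      u \<in> PiE {..<n} As \<and> v \<in> PiE {..<m} Bs}"
    by (rule setcompr_cong2) (simp add: L_eq lincomb_seq_append lincomb_scale a_def b_def)
  also have "\<dots> = pairwise_comb PA PB lam"
    unfolding PA_eq PB_eq pairwise_comb_def a_def b_def by blast
  finally show "pairwise_comb PA PB lam \<in> Posi X" .
qed

lemma subset_Posi: "X \<subseteq> Posi X"
proof
  fix Y assume Y: "Y \<in> X"
  have "{lincomb 1 (\<lambda>_. 1) u | u. u \<in> PiE {..<1} (\<lambda>_. Y)} = Y"
  proof (intro equalityI subsetI)
    fix z assume "z \<in> {lincomb 1 (\<lambda>_. 1) u | u. u \<in> PiE {..<1} (\<lambda>_. Y)}"
    then obtain u where u: "u \<in> PiE {..<1} (\<lambda>_. Y)" and "z = lincomb 1 (\<lambda>_. 1) u"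
      by blast
    then have "z = u 0"
      by (simp add: lincomb_def)
    then show "z \<in> Y"
      using PiE_mem[OF u, of 0] by simp
  next
    fix y assume "y \<in> Y"
    then have "(\<lambda>_::nat. undefined)(0 := y) \<in> PiE {..<1} (\<lambda>_. Y)"
      by (auto simp: PiE_iff extensional_def)
    moreover have "y = lincomb 1 (\<lambda>_. 1) ((\<lambda>_. undefined)(0 := y))"
      by (simp add: lincomb_def)
    ultimately show "y \<in> {lincomb 1 (\<lambda>_. 1) u | u. u \<in> PiE {..<1} (\<lambda>_. Y)}"
      by blast
  qed
  moreover have "(\<lambda>_. 1) \<in> Rnplus 1"
    by (simp add: Rnplus_def)
  ultimately show "Y \<in> Posi X"
    unfolding Posi_iff using Y
    by (intro exI[of _ 1] exI[of _ "\<lambda>_. Y"] exI[of _ "\<lambda>_ _. 1"]) simp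
qed

lemma Rs_mono: "X \<subseteq> Y \<Longrightarrow> Rs X \<subseteq> Rs Y"
  unfolding Rs_def by blast

lemma subset_Rs: "Y \<subseteq> Qs \<Longrightarrow> Y \<subseteq> X \<Longrightarrow> Y \<subseteq> Rs X"
  unfolding Rs_def by blast

lemma Rs_nonpos_superset: "A \<in> Rs X \<Longrightarrow> finite A' \<Longrightarrow> A - Vnonpos \<subseteq> A' \<Longrightarrow> A' \<in> Rs X"
  unfolding Rs_def Qs_def by blast

lemma Rs_eq_Qs_if_empty_mem: "{} \<in> Rs X \<Longrightarrow> Rs X = Qs"
  unfolding Rs_def by blast

lemma Rs_comb_closed:
  assumes X: "comb_closed X"
  shows "comb_closed (Rs X)"
  unfolding comb_closed_def
proof (intro ballI allI impI)
  fix A B lam assume A: "A \<in> Rs X" and B: "B \<in> Rs X" and lam: "\<forall>p\<in>A \<times> B. lam p \<in> Rnplus 2"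
  obtain PA where PA: "PA \<in> X" "PA - Vnonpos \<subseteq> A" and fin_A: "finite A"
    using A unfolding Rs_def Qs_def by blast
  obtain PB where PB: "PB \<in> X" "PB - Vnonpos \<subseteq> B" and fin_B: "finite B"
    using B unfolding Rs_def Qs_def by blast
  text \<open>Nonpositive options are passed through unchanged, so that \<open>Rs\<close> discards them again.\<close>
  define mu where "mu p = (if fst p \<in> Vnonpos then (\<lambda>j::nat. if j = 0 then 1 else 0)
      else if snd p \<in> Vnonpos then (\<lambda>j. if j = 0 then 0 else 1) else lam p)" for p
  have "mu p \<in> Rnplus 2" if p: "p \<in> PA \<times> PB" for p
  proof (cases "fst p \<in> Vnonpos \<or> snd p \<in> Vnonpos")
    case True
    then show ?thesis
      by (auto simp: mu_def Rnplus_2_iff)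
  next
    case False
    then have "p \<in> A \<times> B"
      using p PA(2) PB(2) by (auto simp: mem_Times_iff)
    then show ?thesis
      using bspec[OF lam] False by (simp add: mu_def)
  qed
  then have "pairwise_comb PA PB mu \<in> X"
    using X PA(1) PB(1) unfolding comb_closed_def by simp
  moreover have "pairwise_comb PA PB mu - Vnonpos \<subseteq> pairwise_comb A B lam"
  proof
    fix z assume "z \<in> pairwise_comb PA PB mu - Vnonpos"
    then obtain u v where uv: "u \<in> PA" "v \<in> PB" and z: "z \<notin> Vnonpos"
      and z_eq: "z = (\<lambda>x. mu (u, v) 0 * u x + mu (u, v) 1 * v x)"
      unfolding pairwise_comb_def by blast
    have "u \<notin> Vnonpos" "v \<notin> Vnonpos"
      using z z_eq by (auto simp: mu_def split: if_splits)
    then have "u \<in> A" "v \<in> B" "z = (\<lambda>x. lam (u, v) 0 * u x + lam (u, v) 1 * v x)"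
      using uv PA(2) PB(2) z_eq by (auto simp: mu_def)
    then show "z \<in> pairwise_comb A B lam"
      unfolding pairwise_comb_def by blast
  qed
  ultimately show "pairwise_comb A B lam \<in> Rs X"
    using finite_pairwise_comb[OF fin_A fin_B] unfolding Rs_def Qs_def by blast
qed

lemma coherent_Rs_Posi:
  assumes "Vspos \<subseteq> X" and "{} \<notin> Rs (Posi X)"
  shows "coherent (Rs (Posi X))"
  unfolding coherent_iff_closure_conditions
proof (intro conjI ballI)
  have zero: "0 \<in> Vnonpos"
    by (simp add: Vnonpos_def)
  show "Rs (Posi X) \<subseteq> Qs"
    unfolding Rs_def by blast
  show "A - {0} \<in> Rs (Posi X)" if "A \<in> Rs (Posi X)" for A
    using Rs_nonpos_superset[OF that] zero that unfolding Rs_def Qs_def by blast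
  show "{0} \<notin> Rs (Posi X)"
    using Rs_nonpos_superset[of "{0}" "Posi X" "{}"] zero assms(2) by blast
  show "Vspos \<subseteq> Rs (Posi X)"
    using assms(1) subset_Posi[of X] by (intro subset_Rs) (auto simp: Vspos_def Qs_def)
  show "comb_closed (Rs (Posi X))"
    by (intro Rs_comb_closed Posi_comb_closed)
  show "A \<union> Q \<in> Rs (Posi X)" if "A \<in> Rs (Posi X)" "Q \<in> Qs" for A Q
    using Rs_nonpos_superset[OF that(1)] that unfolding Rs_def Qs_def by blast
qed

lemma Rs_Posi_subset_coherent: "coherent K \<Longrightarrow> X \<subseteq> K \<Longrightarrow> Rs (Posi X) \<subseteq> K"
  using Rs_mono[OF Posi_subset_coherent] Rs_subset_coherent by blast

theorem mainTheorem14: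
  fixes \<A> :: "('x \<Rightarrow> real) set set"
  assumes "\<A> \<subseteq> Qs"
  shows "Ex \<A> = Rs (Posi (Vspos \<union> \<A>))"
proof -
  define R where "R = Rs (Posi (Vspos \<union> \<A>))"
  have least: "R \<subseteq> K" if "coherent K" "\<A> \<subseteq> K" for K
    using Rs_Posi_subset_coherent[OF that(1)] coherent_Vspos_subset[OF that(1)] that(2)
    unfolding R_def by simp
  show ?thesis
  proof (cases "{} \<in> R")
    case True
    have "\<not> (coherent K \<and> \<A> \<subseteq> K)" for K
      using least[of K] coherent_empty_notin[of K] True by blast
    then show ?thesis
      using Rs_eq_Qs_if_empty_mem[OF True[unfolded R_def]] unfolding Ex_def R_def by simp
  next
    case False
    have "coherent R"
      using coherent_Rs_Posi[OF _ False[unfolded R_def]] unfolding R_def by simp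
    moreover have "\<A> \<subseteq> R"
      using subset_Rs[OF assms] subset_Posi[of "Vspos \<union> \<A>"] unfolding R_def by simp
    ultimately have "R \<in> {K. coherent K \<and> \<A> \<subseteq> K}"
      by simp
    moreover from this have "\<Inter> {K. coherent K \<and> \<A> \<subseteq> K} = R"
      using least by (intro antisym Inter_lower Inter_greatest) auto
    ultimately show ?thesis
      unfolding Ex_def R_def by auto
  qed
qed

end
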